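(* Let $G=(V,E)$ be a simple graph on $V=\{1,\dots,n\}$ with graph state $|G\rangle$, and let $$\Omega_g=\sum_{\mathbf b\in\{0,1\}^n}\bigotimes_{j=1}^n|\Phi_{c_j(\mathbf b)\,\mathbf b_j}\rangle\langle\Phi_{c_j(\mathbf b)\,\mathbf b_j}|_{O_jO_j'}$$ acting on $\mathcal H\otimes\mathcal H$, where the first copy consists of qubits $O_1,\dots,O_n$ and the second of $O_1',\dots,O_n'$. Then: (i) $\Omega_g$ is an orthogonal projector and $\mathbb F\Omega_g\mathbb F=\Omega_g$; (ii) for every $n$-qubit state $|\omega\rangle$, $\Omega_g(|G\rangle\otimes|\omega\rangle)=\langle G|\omega\rangle\,|G\rangle\otimes|G\rangle$ and $\Omega_g(|\omega\rangle\otimes|G\rangle)=\langle G|\omega\rangle\,|G\rangle\otimes|G\rangle$; in particular $\Omega_g(|G\rangle\otimes|G\rangle)=|G\rangle\otimes|G\rangle$; (iii) $\Omega_g$ is a symmetric two-copy strategy for $|G\rangle$ with $\Omega_g\mathbb P_\psi=0$ and $\Omega_g\mathbb P_s\mathbb P_\psi=0$ (where $|\psi\rangle=|G\rangle$), hence $\lambda_\star(\Omega_g)=\gamma_\star(\Omega_g)=\xi_\star(\Omega_g)=0$.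
   Context: $\mathcal H=(\mathbb C^2)^{\otimes n}$. The graph state is $|G\rangle=\prod_{\{u,v\}\in E}CZ_{uv}|+\rangle^{\otimes n}$. For $\mathbf b\in\{0,1\}^n$ (a "graph code"), the parity code $c(\mathbf b)\in\{0,1\}^n$ is $c_u(\mathbf b)=\sum_{v:\{u,v\}\in E}\mathbf b_v \bmod 2$. For $z,x\in\{0,1\}$, $|\Phi_{zx}\rangle=(\mathbb I\otimes X^xZ^z)(|00\rangle+|11\rangle)/\sqrt2$. On $\mathcal H\otimes\mathcal H$ (two copies) let $\mathbb F$ be the swap operator $\mathbb F(|x\rangle\otimes|y\rangle)=|y\rangle\otimes|x\rangle$, $\mathbb I$ the identity, $\mathbb P_s=(\mathbb F+\mathbb I)/2$ and $\mathbb P_\psi=|\psi\rangle\langle\psi|\otimes(\mathbb I-|\psi\rangle\langle\psi|)$. A symmetric two-copy strategy for $|\psi\rangle$ is an operator $\Omega$ on $\mathcal H\otimes\mathcal H$ with $0\le\Omega\le\mathbb I$, $\Omega(|\psi\rangle\otimes|\psi\rangle)=|\psi\rangle\otimes|\psi\rangle$ and $\mathbb F\Omega\mathbb F=\Omega$. Define $\lambda_\star(\Omega)$ as the largest eigenvalue of the Hermitian operator $2\mathbb P_\psi\mathbb P_s\Omega\mathbb P_s\mathbb P_\psi$, $\gamma_\star(\Omega)$ as the largest eigenvalue of $\mathbb P_\psi\mathbb F\Omega\mathbb P_\psi$, and $\xi_\star(\Omega)$ as the largest eigenvalue of $\mathbb P_\psi(\tfrac12\mathbb F+\mathbb I)\Omega\mathbb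 P_\psi$. *)

theory Defs
  imports "Jordan_Normal_Form.Schur_Decomposition" "Jordan_Normal_Form.Char_Poly"
begin

text \<open>The n-qubit space (C^2)^(tensor n) is C^(2^n). A computational basis index
  x < 2^n encodes the bit string with qubit j (j = 1..n) given by bit (j-1) of x.
  The two-copy space H (x) H is C^(2^n * 2^n) with the standard Kronecker
  ordering: the basis vector |x> (x) |y> has index x * 2^n + y.\<close>

definition qbit :: "nat \<Rightarrow> nat \<Rightarrow> nat" where
  "qbit j x = (x div 2 ^ (j - 1)) mod 2"

definition braket :: "complex vec \<Rightarrow> complex vec \<Rightarrow> complex" where
  "braket u v = (\<Sum>i<dim_vec u. cnj (u $ i) * v $ i)"

definition tensor_vec :: "complex vec \<Rightarrow> complex vec \<Rightarrow> complex vec" where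
  "tensor_vec u v = vec (dim_vec u * dim_vec v)
     (\<lambda>i. u $ (i div dim_vec v) * v $ (i mod dim_vec v))"

definition tensor_mat :: "complex mat \<Rightarrow> complex mat \<Rightarrow> complex mat" where
  "tensor_mat A B = mat (dim_row A * dim_row B) (dim_col A * dim_col B)
     (\<lambda>(i, j). A $$ (i div dim_row B, j div dim_col B) * B $$ (i mod dim_row B, j mod dim_col B))"

definition ket_bra :: "complex vec \<Rightarrow> complex mat" where
  "ket_bra v = mat (dim_vec v) (dim_vec v) (\<lambda>(i, j). v $ i * cnj (v $ j))"

definition simple_graph :: "nat \<Rightarrow> nat set set \<Rightarrow> bool" where
  "simple_graph n E \<longleftrightarrow> E \<subseteq> {{u, v} | u v. u \<in> {1..n} \<and> v \<in> {1..n} \<and> u \<noteq> v}"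

text \<open>Graph state: prod over edges of CZ_uv applied to |+>^n. Each CZ_uv is diagonal
  with entry -1 on basis states with x_u = x_v = 1; |+>^n has all amplitudes 2^(-n/2).\<close>
definition cz_phase :: "nat set \<Rightarrow> nat \<Rightarrow> complex" where
  "cz_phase e x = (if (\<forall>u\<in>e. qbit u x = 1) then -1 else 1)"

definition graph_state :: "nat \<Rightarrow> nat set set \<Rightarrow> complex vec" where
  "graph_state n E = vec (2 ^ n)
     (\<lambda>x. (\<Prod>e\<in>E. cz_phase e x) * complex_of_real (1 / sqrt (2 ^ n)))"

definition parity_code :: "nat set set \<Rightarrow> (nat \<Rightarrow> nat) \<Rightarrow> nat \<Rightarrow> nat" where
  "parity_code E b u = (\<Sum>v\<in>{v. {u, v} \<in> E}. b v) mod 2"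

definition graph_codes :: "nat \<Rightarrow> (nat \<Rightarrow> nat) set" where
  "graph_codes n = {1..n} \<rightarrow>\<^sub>E {0, 1}"

text \<open>Amplitude <a a'| Phi_zx> of |Phi_zx> = (I (x) X^x Z^z)(|00> + |11>)/sqrt 2.
  Since Z^z|a> = (-1)^(z a)|a> and X^x|a> = |a xor x>, this is
  (-1)^(z a)/sqrt 2 if a' = a xor x and 0 otherwise.\<close>
definition bell_amp :: "nat \<Rightarrow> nat \<Rightarrow> nat \<Rightarrow> nat \<Rightarrow> complex" where
  "bell_amp z x a a' =
     (if a' = (a + x) mod 2 then (-1) ^ (z * a) * complex_of_real (1 / sqrt 2) else 0)"

text \<open>Omega_g = sum_b tensor_j |Phi_{c_j(b) b_j}><Phi_{c_j(b) b_j}| on qubit pairs O_j O_j'.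
  Matrix entry at row |x>|y>, column |x'>|y'>.\<close>
definition Omega_g :: "nat \<Rightarrow> nat set set \<Rightarrow> complex mat" where
  "Omega_g n E = mat (2 ^ n * 2 ^ n) (2 ^ n * 2 ^ n) (\<lambda>(r, c).
     (\<Sum>b\<in>graph_codes n. \<Prod>j\<in>{1..n}.
        bell_amp (parity_code E b j) (b j) (qbit j (r div 2 ^ n)) (qbit j (r mod 2 ^ n))
        * cnj (bell_amp (parity_code E b j) (b j) (qbit j (c div 2 ^ n)) (qbit j (c mod 2 ^ n)))))"

definition swap_op :: "nat \<Rightarrow> complex mat" where
  "swap_op d = mat (d * d) (d * d) (\<lambda>(r, c).
     if r div d = c mod d \<and> r mod d = c div d then 1 else 0)"

definition P_sym :: "nat \<Rightarrow> complex mat" where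
  "P_sym d = (1 / 2 :: complex) \<cdot>\<^sub>m (swap_op d + 1\<^sub>m (d * d))"

definition P_psi :: "complex vec \<Rightarrow> complex mat" where
  "P_psi psi = tensor_mat (ket_bra psi) (1\<^sub>m (dim_vec psi) - ket_bra psi)"

definition psd :: "nat \<Rightarrow> complex mat \<Rightarrow> bool" where
  "psd m A \<longleftrightarrow> A \<in> carrier_mat m m \<and>
     (\<forall>w \<in> carrier_vec m. Im (braket w (A *\<^sub>v w)) = 0 \<and> 0 \<le> Re (braket w (A *\<^sub>v w)))"

definition sym_two_copy_strategy :: "complex vec \<Rightarrow> complex mat \<Rightarrow> bool" where
  "sym_two_copy_strategy psi Om \<longleftrightarrow>
     (let d = dim_vec psi in
      psd (d * d) Om \<and> psd (d * d) (1\<^sub>m (d * d) - Om) \<and>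
      Om *\<^sub>v tensor_vec psi psi = tensor_vec psi psi \<and>
      swap_op d * Om * swap_op d = Om)"

definition largest_eigenvalue :: "complex mat \<Rightarrow> real" where
  "largest_eigenvalue A = Max {r. eigenvalue A (complex_of_real r)}"

definition lambda_star :: "complex vec \<Rightarrow> complex mat \<Rightarrow> real" where
  "lambda_star psi Om = (let d = dim_vec psi in
     largest_eigenvalue ((2 :: complex) \<cdot>\<^sub>m (P_psi psi * P_sym d * Om * P_sym d * P_psi psi)))"

definition gamma_star :: "complex vec \<Rightarrow> complex mat \<Rightarrow> real" where
  "gamma_star psi Om = (let d = dim_vec psi in
     largest_eigenvalue (P_psi psi * swap_op d * Om * P_psi psi))"

definition xi_star :: "complex vec \<Rightarrow> complex mat \<Rightarrow> real" where
  "xi_star psi Om = (let d = dim_vec psi in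
     largest_eigenvalue (P_psi psi * ((1 / 2 :: complex) \<cdot>\<^sub>m swap_op d + 1\<^sub>m (d * d)) * Om * P_psi psi))"

end

theory Submission
  imports Defs
begin

(*
  Write c(m) for the parity code of the bit string m and A_m for the product of Bell states
  tensor_j |Phi_{c_j(m) m_j}>, so that Omega_g = sum_m |A_m><A_m|.  In the computational basis
  A_m(x, y) = 2^(-n/2) (-1)^(c(m).x) if y = x xor m, and 0 otherwise.  The A_m are orthonormal,
  so Omega_g is a projector, and swapping the two copies multiplies A_m by (-1)^(c(m).m), so
  Omega_g commutes with the swap.

  The graph state has amplitudes 2^(-n/2) (-1)^(q(x)) with q(x) = sum_{uv in E} x_u x_v, and
  q(x xor m) = q(x) + q(m) + c(m).x (mod 2).  Hence <A_m | G (x) w> = 2^(-n/2) (-1)^(q(m)) <G|w>,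
  and summing over m gives Omega_g (|G> (x) |w>) = <G|w> |G> (x) |G>.  Every column of P_psi has
  the form |G> (x) |w> with w orthogonal to G, so Omega_g P_psi = 0; as Omega_g commutes with
  the swap, also Omega_g P_s P_psi = 0, and the operators defining lambda*, gamma*, xi* vanish.
*)

lemma sum_lessThan_square_decompose:
  "(\<Sum>r<N * N. h r) = (\<Sum>x<N. \<Sum>y<N. h (x * N + y :: nat))"
proof -
  have "(\<Sum>r<N * N. h r) = (\<Sum>x<N. \<Sum>r\<in>{0 + x * N..<N + x * N}. h r)"
    using sum.nat_group[of h N N] by (simp add: add.commute)
  also have "\<dots> = (\<Sum>x<N. \<Sum>y<N. h (x * N + y))"
    by (simp only: sum.shift_bounds_nat_ivl atLeast0LessThan add.commute)
  finally show ?thesis .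
qed

lemma prod_if_zero:
  assumes "finite A"
  shows "(\<Prod>j\<in>A. if P j then f j else (0::'a::comm_semiring_1))
    = (if \<forall>j\<in>A. P j then \<Prod>j\<in>A. f j else 0)"
proof (cases "\<forall>j\<in>A. P j")
  case False
  then obtain j where "j \<in> A" "\<not> P j" by blast
  then show ?thesis using assms by (auto intro!: prod_zero)
qed (auto intro: prod.cong)

section \<open>Hermitian projectors\<close>

lemma mat_adjoint_carrier: "A \<in> carrier_mat m n \<Longrightarrow> mat_adjoint A \<in> carrier_mat n m"
  unfolding mat_adjoint_def by auto

lemma mat_adjoint_index:
  "A \<in> carrier_mat m n \<Longrightarrow> i < n \<Longrightarrow> j < m \<Longrightarrow> mat_adjoint A $$ (i, j) = cnj (A $$ (j, i))"
  unfolding mat_adjoint_def by (simp add: mat_of_rows_index)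

lemma mat_adjointI:
  assumes "A \<in> carrier_mat n n" "\<And>i j. i < n \<Longrightarrow> j < n \<Longrightarrow> cnj (A $$ (j, i)) = A $$ (i, j)"
  shows "mat_adjoint A = A"
  using assms mat_adjoint_carrier[OF assms(1)] by (intro eq_matI) (auto simp: mat_adjoint_index)

lemma braket_mult_mat_vec:
  assumes A: "A \<in> carrier_mat n n" and u: "u \<in> carrier_vec n" and w: "w \<in> carrier_vec n"
  shows "braket u (A *\<^sub>v w) = braket (mat_adjoint A *\<^sub>v u) w"
proof -
  have "braket u (A *\<^sub>v w) = (\<Sum>i<n. \<Sum>j<n. cnj (u $ i) * A $$ (i, j) * w $ j)"
    using A u w by (simp add: braket_def scalar_prod_def lessThan_atLeast0 sum_distrib_left ac_simps)
  also have "\<dots> = (\<Sum>j<n. \<Sum>i<n. cnj (u $ i) * A $$ (i, j) * w $ j)"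
    by (rule sum.swap)
  also have "\<dots> = braket (mat_adjoint A *\<^sub>v u) w"
    using A u w mat_adjoint_carrier[OF A]
    by (simp add: braket_def scalar_prod_def lessThan_atLeast0 sum_distrib_left sum_distrib_right
        mat_adjoint_index ac_simps)
  finally show ?thesis .
qed

lemma braket_self_nonneg: "Im (braket v v) = 0 \<and> 0 \<le> Re (braket v v)"
proof -
  have sq: "cnj (v $ i) * v $ i = complex_of_real ((cmod (v $ i))\<^sup>2)" for i
    by (metis complex_norm_square mult.commute)
  show ?thesis unfolding braket_def sq by (simp add: sum_nonneg)
qed

lemma psd_projector:
  assumes P: "P \<in> carrier_mat n n" and idem: "P * P = P" and adj: "mat_adjoint P = P"
  shows "psd n P"
  unfolding psd_def
proof (intro conjI[OF P] ballI)
  fix w :: "complex vec" assume w: "w \<in> carrier_vec n"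
  have "braket w (P *\<^sub>v w) = braket w (P *\<^sub>v (P *\<^sub>v w))"
    using P w idem by (simp add: assoc_mult_mat_vec[symmetric])
  also have "\<dots> = braket (P *\<^sub>v w) (P *\<^sub>v w)"
    using braket_mult_mat_vec[OF P w, of "P *\<^sub>v w"] P w adj by simp
  finally show "Im (braket w (P *\<^sub>v w)) = 0 \<and> 0 \<le> Re (braket w (P *\<^sub>v w))"
    using braket_self_nonneg by simp
qed

lemma complement_projector:
  assumes P: "(P :: complex mat) \<in> carrier_mat n n" and idem: "P * P = P" and adj: "mat_adjoint P = P"
  shows "(1\<^sub>m n - P) * (1\<^sub>m n - P) = 1\<^sub>m n - P" and "mat_adjoint (1\<^sub>m n - P) = 1\<^sub>m n - P"
proof -
  have "(1\<^sub>m n - P) * (1\<^sub>m n - P) = (1\<^sub>m n - P) * 1\<^sub>m n - (1\<^sub>m n - P) * P"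
    using P by (intro mult_minus_distrib_mat) auto
  also have "(1\<^sub>m n - P) * P = P - P * P"
    using P by (subst minus_mult_distrib_mat) auto
  finally show "(1\<^sub>m n - P) * (1\<^sub>m n - P) = 1\<^sub>m n - P"
    using P idem by (intro eq_matI) auto
  have "cnj (P $$ (j, i)) = P $$ (i, j)" if "i < n" "j < n" for i j
    using mat_adjoint_index[OF P that] adj by simp
  then show "mat_adjoint (1\<^sub>m n - P) = 1\<^sub>m n - P"
    using P by (intro mat_adjointI) auto
qed

definition sum_ket_bra :: "nat \<Rightarrow> nat \<Rightarrow> (nat \<Rightarrow> nat \<Rightarrow> complex) \<Rightarrow> complex mat" where
  "sum_ket_bra D K a = mat D D (\<lambda>(i, j). \<Sum>m<K. a m i * cnj (a m j))"

definition orthonormal_family :: "nat \<Rightarrow> nat \<Rightarrow> (nat \<Rightarrow> nat \<Rightarrow> complex) \<Rightarrow> bool" where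
  "orthonormal_family D K a \<longleftrightarrow>
     (\<forall>m<K. \<forall>m'<K. (\<Sum>l<D. cnj (a m l) * a m' l) = (if m = m' then 1 else 0))"

lemma sum_ket_bra_carrier: "sum_ket_bra D K a \<in> carrier_mat D D"
  unfolding sum_ket_bra_def by simp

lemma sum_ket_bra_index:
  "i < D \<Longrightarrow> j < D \<Longrightarrow> sum_ket_bra D K a $$ (i, j) = (\<Sum>m<K. a m i * cnj (a m j))"
  unfolding sum_ket_bra_def by simp

lemma sum_ket_bra_hermitian:
  "i < D \<Longrightarrow> j < D \<Longrightarrow> cnj (sum_ket_bra D K a $$ (j, i)) = sum_ket_bra D K a $$ (i, j)"
  by (simp add: sum_ket_bra_index ac_simps)

lemma sum_ket_bra_idempotent:
  assumes "orthonormal_family D K a"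
  shows "sum_ket_bra D K a * sum_ket_bra D K a = sum_ket_bra D K a"
proof (rule eq_matI)
  fix i k assume "i < dim_row (sum_ket_bra D K a)" "k < dim_col (sum_ket_bra D K a)"
  then have i: "i < D" and k: "k < D" by (auto simp: sum_ket_bra_def)
  have "(sum_ket_bra D K a * sum_ket_bra D K a) $$ (i, k)
      = (\<Sum>l<D. (\<Sum>m<K. a m i * cnj (a m l)) * (\<Sum>m'<K. a m' l * cnj (a m' k)))"
    using i k by (simp add: sum_ket_bra_def scalar_prod_def lessThan_atLeast0)
  also have "\<dots> = (\<Sum>l<D. \<Sum>m<K. \<Sum>m'<K. (a m i * cnj (a m' k)) * (cnj (a m l) * a m' l))"
    unfolding sum_product by (intro sum.cong refl) (simp add: ac_simps)
  also have "\<dots> = (\<Sum>m<K. \<Sum>m'<K. (a m i * cnj (a m' k)) * (\<Sum>l<D. cnj (a m l) * a m' l))"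
    unfolding sum_distrib_left by (subst sum.swap) (simp add: sum.swap[of _ "{..<D}"])
  also have "\<dots> = (\<Sum>m<K. \<Sum>m'<K. (a m i * cnj (a m' k)) * (if m = m' then 1 else 0))"
    using assms unfolding orthonormal_family_def by (intro sum.cong refl) simp
  also have "\<dots> = (\<Sum>m<K. a m i * cnj (a m k))"
    by (simp add: if_distrib cong: if_cong)
  also have "\<dots> = sum_ket_bra D K a $$ (i, k)"
    using i k by (simp add: sum_ket_bra_index)
  finally show "(sum_ket_bra D K a * sum_ket_bra D K a) $$ (i, k) = sum_ket_bra D K a $$ (i, k)" .
qed (auto simp: sum_ket_bra_def)

lemma sum_ket_bra_mult_vec:
  assumes "v \<in> carrier_vec D" "r < D"
  shows "(sum_ket_bra D K a *\<^sub>v v) $ r = (\<Sum>m<K. a m r * (\<Sum>s<D. cnj (a m s) * v $ s))"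
proof -
  have "(sum_ket_bra D K a *\<^sub>v v) $ r = (\<Sum>s<D. (\<Sum>m<K. a m r * cnj (a m s)) * v $ s)"
    using assms by (simp add: sum_ket_bra_def scalar_prod_def lessThan_atLeast0 row_def)
  also have "\<dots> = (\<Sum>m<K. a m r * (\<Sum>s<D. cnj (a m s) * v $ s))"
    unfolding sum_distrib_right sum_distrib_left by (subst sum.swap) (simp add: ac_simps)
  finally show ?thesis .
qed

lemma sum_ket_bra_adjoint: "mat_adjoint (sum_ket_bra D K a) = sum_ket_bra D K a"
  by (rule mat_adjointI[OF sum_ket_bra_carrier]) (rule sum_ket_bra_hermitian)

section \<open>Two-copy operators\<close>

lemma tensor_vec_carrier:
  "u \<in> carrier_vec m \<Longrightarrow> v \<in> carrier_vec n \<Longrightarrow> tensor_vec u v \<in> carrier_vec (m * n)"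
  unfolding tensor_vec_def by simp

lemma tensor_vec_index:
  "u \<in> carrier_vec m \<Longrightarrow> v \<in> carrier_vec n \<Longrightarrow> r < m * n \<Longrightarrow>
   tensor_vec u v $ r = u $ (r div n) * v $ (r mod n)"
  unfolding tensor_vec_def by simp

definition swap_index :: "nat \<Rightarrow> nat \<Rightarrow> nat" where
  "swap_index d r = (r mod d) * d + r div d"

lemma pair_index_less:
  assumes "x < d" "y < d"
  shows "x * d + y < d * (d :: nat)"
proof -
  have "x * d + y < (x + 1) * d" using assms by simp
  also have "\<dots> \<le> d * d" using assms by (intro mult_le_mono1) simp
  finally show ?thesis .
qed

lemma swap_index:
  assumes "r < d * d"
  shows "swap_index d r < d * d" "swap_index d r div d = r mod d" "swap_index d r mod d = r div d"
    "swap_index d (swap_index d r) = r"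
proof -
  have "r div d < d" using assms by (simp add: less_mult_imp_div_less)
  moreover have "r mod d < d" using assms by (cases d) auto
  ultimately show div: "swap_index d r div d = r mod d" and "swap_index d r mod d = r div d"
    and "swap_index d r < d * d"
    by (simp_all add: swap_index_def pair_index_less)
  then show "swap_index d (swap_index d r) = r"
    unfolding swap_index_def[of d "swap_index d r"] by simp
qed

lemma swap_op_carrier: "swap_op d \<in> carrier_mat (d * d) (d * d)"
  unfolding swap_op_def by simp

lemma swap_op_index:
  assumes "i < d * d" "j < d * d"
  shows "swap_op d $$ (i, j) = (if j = swap_index d i then 1 else 0)"
proof -
  have "(i div d = j mod d \<and> i mod d = j div d) \<longleftrightarrow> j = swap_index d i"
    using swap_index[OF assms(1)] div_mult_mod_eq[of j d] by (auto simp: swap_index_def)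
  then show ?thesis using assms unfolding swap_op_def by simp
qed

lemma swap_op_mult_vec:
  assumes "v \<in> carrier_vec (d * d)" "r < d * d"
  shows "(swap_op d *\<^sub>v v) $ r = v $ swap_index d r"
proof -
  have "(swap_op d *\<^sub>v v) $ r = (\<Sum>c<d * d. swap_op d $$ (r, c) * v $ c)"
    using assms swap_op_carrier[of d] by (simp add: scalar_prod_def lessThan_atLeast0)
  also have "\<dots> = (\<Sum>c<d * d. if c = swap_index d r then v $ c else 0)"
    using assms by (intro sum.cong refl) (simp add: swap_op_index)
  finally show ?thesis using swap_index(1)[OF assms(2)] by simp
qed

lemma swap_op_mult_mat:
  assumes "M \<in> carrier_mat (d * d) (d * d)" "i < d * d" "j < d * d"
  shows "(swap_op d * M) $$ (i, j) = M $$ (swap_index d i, j)"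
  using swap_op_mult_vec[of "col M j" d i] assms swap_op_carrier[of d] swap_index(1)[of i d]
  by simp

lemma mat_mult_swap_op:
  assumes "M \<in> carrier_mat (d * d) (d * d)" "i < d * d" "j < d * d"
  shows "(M * swap_op d) $$ (i, j) = M $$ (i, swap_index d j)"
proof -
  have "(M * swap_op d) $$ (i, j) = (\<Sum>k<d * d. M $$ (i, k) * swap_op d $$ (k, j))"
    using assms swap_op_carrier[of d] by (simp add: scalar_prod_def lessThan_atLeast0)
  also have "\<dots> = (\<Sum>k<d * d. if k = swap_index d j then M $$ (i, k) else 0)"
  proof (intro sum.cong refl)
    fix k assume "k \<in> {..<d * d}"
    then have k: "k < d * d" by simp
    then have "j = swap_index d k \<longleftrightarrow> k = swap_index d j"
      using swap_index(4)[OF k] swap_index(4)[OF assms(3)] by metis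
    then show "M $$ (i, k) * swap_op d $$ (k, j) = (if k = swap_index d j then M $$ (i, k) else 0)"
      using k assms(3) by (simp add: swap_op_index)
  qed
  finally show ?thesis using swap_index(1)[OF assms(3)] by simp
qed

lemma swap_op_squared: "swap_op d * swap_op d = 1\<^sub>m (d * d)"
proof (rule eq_matI)
  fix i j assume "i < dim_row (1\<^sub>m (d * d) :: complex mat)" "j < dim_col (1\<^sub>m (d * d) :: complex mat)"
  then have ij: "i < d * d" "j < d * d" by auto
  have "(swap_op d * swap_op d) $$ (i, j) = swap_op d $$ (swap_index d i, j)"
    using swap_op_mult_mat[OF swap_op_carrier ij] .
  then show "(swap_op d * swap_op d) $$ (i, j) = 1\<^sub>m (d * d) $$ (i, j)"
    using ij swap_index[OF ij(1)] by (auto simp: swap_op_index)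
qed (use swap_op_carrier in auto)

lemma swap_op_tensor_vec:
  assumes "u \<in> carrier_vec d" "v \<in> carrier_vec d"
  shows "swap_op d *\<^sub>v tensor_vec u v = tensor_vec v u"
proof (rule eq_vecI)
  have uv: "tensor_vec u v \<in> carrier_vec (d * d)" and vu: "tensor_vec v u \<in> carrier_vec (d * d)"
    using tensor_vec_carrier assms by auto
  then show "dim_vec (swap_op d *\<^sub>v tensor_vec u v) = dim_vec (tensor_vec v u)"
    using swap_op_carrier[of d] by simp
  fix r assume "r < dim_vec (tensor_vec v u)"
  then have r: "r < d * d" using vu by simp
  show "(swap_op d *\<^sub>v tensor_vec u v) $ r = tensor_vec v u $ r"
    using assms r swap_index[OF r]
    by (simp add: swap_op_mult_vec[OF uv r] tensor_vec_index mult.commute)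
qed

lemma commute_if_conjugation_fixed:
  fixes F M :: "'a :: semiring_1 mat"
  assumes F: "F \<in> carrier_mat n n" and M: "M \<in> carrier_mat n n"
    and inv: "F * F = 1\<^sub>m n" and fixed: "F * M * F = M"
  shows "M * F = F * M"
proof -
  have "M * F = F * M * F * F" using fixed by simp
  also have "\<dots> = F * M * (F * F)" using F M by (simp add: assoc_mult_mat[of _ n n _ n _ n])
  also have "\<dots> = F * M" by (simp add: inv right_mult_one_mat[OF mult_carrier_mat[OF F M]])
  finally show ?thesis .
qed

lemma P_psi_carrier: "psi \<in> carrier_vec d \<Longrightarrow> P_psi psi \<in> carrier_mat (d * d) (d * d)"
  unfolding P_psi_def tensor_mat_def ket_bra_def by auto

lemma col_P_psi:
  assumes psi: "psi \<in> carrier_vec d" and j: "j < d * d"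
  shows "col (P_psi psi) j = tensor_vec psi
    (vec d (\<lambda>k. cnj (psi $ (j div d)) * ((if k = j mod d then 1 else 0) - psi $ k * cnj (psi $ (j mod d)))))"
    (is "_ = tensor_vec psi ?w")
proof (rule eq_vecI)
  have w: "?w \<in> carrier_vec d" by simp
  show "dim_vec (col (P_psi psi) j) = dim_vec (tensor_vec psi ?w)"
    using P_psi_carrier[OF psi] tensor_vec_carrier[OF psi w] by simp
  fix k assume "k < dim_vec (tensor_vec psi ?w)"
  then have k: "k < d * d" using tensor_vec_carrier[OF psi w] by simp
  moreover have "d > 0" using j by (cases d) auto
  ultimately have "k div d < d" "k mod d < d" "j div d < d" "j mod d < d"
    using j by (auto simp: less_mult_imp_div_less)
  then show "col (P_psi psi) j $ k = tensor_vec psi ?w $ k"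
    using psi j k P_psi_carrier[OF psi]
    by (simp add: P_psi_def tensor_mat_def ket_bra_def tensor_vec_index[OF psi w] ac_simps)
qed

lemma mult_P_psi_eq_zero:
  assumes psi: "psi \<in> carrier_vec d" and normalized: "braket psi psi = 1"
    and M: "M \<in> carrier_mat (d * d) (d * d)"
    and kills: "\<And>w. w \<in> carrier_vec d \<Longrightarrow> braket psi w = 0 \<Longrightarrow> M *\<^sub>v tensor_vec psi w = 0\<^sub>v (d * d)"
  shows "M * P_psi psi = 0\<^sub>m (d * d) (d * d)"
proof (rule eq_matI)
  fix i j
  assume "i < dim_row (0\<^sub>m (d * d) (d * d) :: complex mat)"
    and "j < dim_col (0\<^sub>m (d * d) (d * d) :: complex mat)"
  then have i: "i < d * d" and j: "j < d * d" by auto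
  define a where "a = cnj (psi $ (j div d))"
  define b where "b = cnj (psi $ (j mod d))"
  define w where "w = vec d (\<lambda>k. a * ((if k = j mod d then 1 else 0) - psi $ k * b))"
  have w: "w \<in> carrier_vec d" unfolding w_def by simp
  have "j mod d < d" using j by (cases d) auto
  have "braket psi w
      = (\<Sum>k<d. (if k = j mod d then a * cnj (psi $ k) else 0) - a * b * (cnj (psi $ k) * psi $ k))"
    unfolding braket_def using psi w by (intro sum.cong) (auto simp: w_def algebra_simps)
  also have "\<dots> = a * b - a * b * braket psi psi"
    unfolding sum_subtractf sum_distrib_left[symmetric] using \<open>j mod d < d\<close> psi
    by (simp add: braket_def b_def)
  finally have "braket psi w = 0" using normalized by simp
  have "(M * P_psi psi) $$ (i, j) = (M *\<^sub>v col (P_psi psi) j) $ i"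
    using i j M P_psi_carrier[OF psi] by simp
  also have "col (P_psi psi) j = tensor_vec psi w"
    unfolding col_P_psi[OF psi j] w_def a_def b_def ..
  finally show "(M * P_psi psi) $$ (i, j) = 0\<^sub>m (d * d) (d * d) $$ (i, j)"
    using kills[OF w \<open>braket psi w = 0\<close>] i j by simp
qed (use M P_psi_carrier[OF assms(1)] in auto)

lemma mult_P_sym_mult_eq_zero:
  assumes M: "M \<in> carrier_mat (d * d) (d * d)" and P: "P \<in> carrier_mat (d * d) (d * d)"
    and commute: "M * swap_op d = swap_op d * M" and zero: "M * P = 0\<^sub>m (d * d) (d * d)"
  shows "M * P_sym d * P = 0\<^sub>m (d * d) (d * d)"
proof -
  note F = swap_op_carrier[of d]
  have "M * P_sym d = (1 / 2) \<cdot>\<^sub>m (M * (swap_op d + 1\<^sub>m (d * d)))"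
    unfolding P_sym_def using F by (intro mult_smult_distrib[OF M]) (rule add_carrier_mat, auto)
  also have "M * (swap_op d + 1\<^sub>m (d * d)) = M * swap_op d + M"
    using M F by (simp add: mult_add_distrib_mat[OF M F])
  finally have "M * P_sym d = (1 / 2) \<cdot>\<^sub>m (M * swap_op d + M)" .
  moreover have "M * swap_op d + M \<in> carrier_mat (d * d) (d * d)" using M F by simp
  ultimately have "M * P_sym d * P = (1 / 2) \<cdot>\<^sub>m ((M * swap_op d + M) * P)"
    using mult_smult_assoc_mat[OF _ P] by simp
  also have "(M * swap_op d + M) * P = M * swap_op d * P + M * P"
    by (rule add_mult_distrib_mat[OF mult_carrier_mat[OF M F] M P])
  also have "M * swap_op d * P = swap_op d * (M * P)"
    unfolding commute using M P F by (simp add: assoc_mult_mat[of _ "d * d" "d * d"])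
  finally show ?thesis using zero F by simp
qed

lemma mult_eq_zero_if_right_eq_zero:
  assumes "A \<in> carrier_mat n n" "B \<in> carrier_mat n n" "C \<in> carrier_mat n n" "B * C = 0\<^sub>m n n"
  shows "A * B * C = (0\<^sub>m n n :: 'a :: semiring_0 mat)"
  using assms by (simp add: assoc_mult_mat[of A n n B n C n])

lemma largest_eigenvalue_zero_mat:
  assumes "n > 0"
  shows "largest_eigenvalue (0\<^sub>m n n :: complex mat) = 0"
proof -
  have "eigenvalue (0\<^sub>m n n :: complex mat) k \<longleftrightarrow> k = 0" for k
  proof
    assume "eigenvalue (0\<^sub>m n n) k"
    then obtain v where v: "v \<in> carrier_vec n" "v \<noteq> 0\<^sub>v n" "0\<^sub>m n n *\<^sub>v v = k \<cdot>\<^sub>v v"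
      unfolding eigenvalue_def eigenvector_def by auto
    then obtain i where "i < n" "v $ i \<noteq> 0" by (metis eq_vecI carrier_vecD index_zero_vec)
    moreover have "(0\<^sub>m n n *\<^sub>v v) $ i = 0"
      using \<open>i < n\<close> v(1) by (simp add: scalar_prod_def)
    then have "k * v $ i = 0"
      using v(1,3) \<open>i < n\<close> by (metis index_smult_vec(1) carrier_vecD)
    ultimately show "k = 0" by simp
  next
    assume "k = 0"
    have "unit_vec n 0 \<noteq> (0\<^sub>v n :: complex vec)"
      using assms by (metis index_unit_vec(1) index_zero_vec(1) zero_neq_one)
    then show "eigenvalue (0\<^sub>m n n) k"
      unfolding eigenvalue_def eigenvector_def \<open>k = 0\<close>
      by (intro exI[of _ "unit_vec n 0"]) auto
  qed
  then show ?thesis unfolding largest_eigenvalue_def by simp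
qed

lemma star_quantities_eq_zero:
  assumes psi: "psi \<in> carrier_vec d" and "d > 0" and M: "M \<in> carrier_mat (d * d) (d * d)"
    and zero: "M * P_psi psi = 0\<^sub>m (d * d) (d * d)"
    and sym_zero: "M * P_sym d * P_psi psi = 0\<^sub>m (d * d) (d * d)"
  shows "lambda_star psi M = 0 \<and> gamma_star psi M = 0 \<and> xi_star psi M = 0"
proof -
  have dim: "dim_vec psi = d" using psi by simp
  note P = P_psi_carrier[OF psi] and F = swap_op_carrier[of d]
  have S: "P_sym d \<in> carrier_mat (d * d) (d * d)" unfolding P_sym_def by simp
  have "P_psi psi * P_sym d * M * P_sym d = P_psi psi * P_sym d * (M * P_sym d)"
    by (rule assoc_mult_mat[OF mult_carrier_mat[OF P S] M S])
  then have "P_psi psi * P_sym d * M * P_sym d * P_psi psi = 0\<^sub>m (d * d) (d * d)"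
    using mult_eq_zero_if_right_eq_zero[OF mult_carrier_mat[OF P S] mult_carrier_mat[OF M S] P sym_zero]
    by simp
  moreover have "P_psi psi * swap_op d * M * P_psi psi = 0\<^sub>m (d * d) (d * d)"
    by (rule mult_eq_zero_if_right_eq_zero[OF mult_carrier_mat[OF P F] M P zero])
  moreover have "P_psi psi * ((1 / 2) \<cdot>\<^sub>m swap_op d + 1\<^sub>m (d * d)) * M * P_psi psi = 0\<^sub>m (d * d) (d * d)"
    using F by (intro mult_eq_zero_if_right_eq_zero[OF _ M P zero] mult_carrier_mat[OF P]) auto
  ultimately show ?thesis
    unfolding lambda_star_def gamma_star_def xi_star_def Let_def dim
    using largest_eigenvalue_zero_mat[of "d * d"] \<open>d > 0\<close> by simp
qed

section \<open>Bit strings\<close>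

lemma qbit_eq_bit: "qbit j x = (if bit x (j - 1) then 1 else 0)"
  unfolding qbit_def bit_iff_odd by (auto simp: odd_iff_mod_2_eq_one)

lemma qbit_cases: "qbit j x = 0 \<or> qbit j x = 1"
  unfolding qbit_def by auto

lemma qbit_xor: "qbit j (xor x m) = (qbit j x + qbit j m) mod 2"
  unfolding qbit_eq_bit by (auto simp: bit_xor_iff)

lemma xor_less_power2: "(x :: nat) < 2 ^ n \<Longrightarrow> m < 2 ^ n \<Longrightarrow> xor x m < 2 ^ n"
  by (metis take_bit_nat_eq_self_iff take_bit_xor)

lemma xor_cancel_left: "xor x (xor x m) = (m :: nat)"
  by (simp add: xor.assoc[symmetric])

lemma xor_eq_xor_iff: "xor x m = xor x m' \<longleftrightarrow> m = (m' :: nat)"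
  by (metis xor_cancel_left)

lemma eq_if_qbit_eq:
  assumes "(x :: nat) < 2 ^ n" "y < 2 ^ n" "\<forall>j\<in>{1..n}. qbit j x = qbit j y"
  shows "x = y"
proof (rule bit_eqI)
  fix k show "bit x k = bit y k"
  proof (cases "k < n")
    case True
    then have "qbit (k + 1) x = qbit (k + 1) y" using assms(3) by auto
    then show ?thesis unfolding qbit_eq_bit by (auto split: if_splits)
  next
    case False
    then have "x < 2 ^ k" "y < 2 ^ k"
      using assms(1,2) by (meson less_le_trans not_less one_le_numeral power_increasing)+
    then show ?thesis by (simp add: bit_iff_odd)
  qed
qed

definition bit_code :: "nat \<Rightarrow> nat \<Rightarrow> nat \<Rightarrow> nat" where
  "bit_code n x = restrict (\<lambda>j. qbit j x) {1..n}"

lemma bit_code_in_graph_codes: "bit_code n x \<in> graph_codes n"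
  using qbit_cases[of _ x] unfolding graph_codes_def bit_code_def by (auto simp: PiE_iff)

lemma bij_betw_bit_code: "bij_betw (bit_code n) {..<2 ^ n} (graph_codes n)"
proof -
  have inj: "inj_on (bit_code n) {..<2 ^ n}"
  proof (rule inj_onI)
    fix x y assume "x \<in> {..<2 ^ n}" "y \<in> {..<2 ^ n}" "bit_code n x = bit_code n y"
    moreover have "\<forall>j\<in>{1..n}. qbit j x = qbit j y"
    proof
      fix j assume "j \<in> {1..n}"
      then show "qbit j x = qbit j y"
        using fun_cong[OF \<open>bit_code n x = bit_code n y\<close>, of j] by (simp add: bit_code_def)
    qed
    ultimately show "x = y" using eq_if_qbit_eq by auto
  qed
  have "bit_code n ` {..<2 ^ n} \<subseteq> graph_codes n"
    using bit_code_in_graph_codes by blast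
  moreover have "card (bit_code n ` {..<2 ^ n}) = card (graph_codes n)"
    using card_image[OF inj] by (simp add: graph_codes_def card_PiE numeral_2_eq_2)
  ultimately have "bit_code n ` {..<2 ^ n} = graph_codes n"
    by (intro card_subset_eq) (auto simp: graph_codes_def intro!: finite_PiE)
  then show ?thesis using inj by (simp add: bij_betw_def)
qed

lemma sum_graph_codes: "(\<Sum>b\<in>graph_codes n. h b) = (\<Sum>m<2 ^ n. h (bit_code n m))"
  using sum.reindex[of "bit_code n" "{..<2 ^ n}" h] bij_betw_bit_code[of n]
  by (simp add: bij_betw_def)

lemma sum_xor_reindex:
  "(m :: nat) < 2 ^ n \<Longrightarrow> (\<Sum>x<2 ^ n. h (xor x m)) = (\<Sum>x<2 ^ n. h x)"
  by (rule sum.reindex_bij_witness[where i="\<lambda>x. xor x m" and j="\<lambda>x. xor x m"])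
     (auto simp: xor_less_power2 xor.assoc)

section \<open>The Bell-basis strategy for a graph state\<close>

locale qubit_graph =
  fixes n :: nat and E :: "nat set set"
  assumes simple: "simple_graph n E"
begin

lemma edge_cases:
  assumes "e \<in> E"
  obtains u v where "e = {u, v}" "u \<in> {1..n}" "v \<in> {1..n}" "u \<noteq> v"
  using simple assms unfolding simple_graph_def by blast

lemma edge_vertices:
  assumes "{u, v} \<in> E"
  shows "u \<in> {1..n}" "v \<in> {1..n}" "u \<noteq> v"
  using edge_cases[OF assms] by (metis doubleton_eq_iff)+

lemma finite_edges: "finite E"
proof -
  have "E \<subseteq> (\<lambda>(u, v). {u, v}) ` ({1..n} \<times> {1..n})"
    by (auto elim!: edge_cases)
  then show ?thesis by (rule finite_subset) auto
qed

lemma finite_neighbours: "finite {v. {u, v} \<in> E}"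
  by (rule finite_subset[of _ "{1..n}"]) (auto dest: edge_vertices)

lemma sum_edges_ordered_pairs:
  "(\<Sum>e\<in>E. \<Sum>u\<in>e. \<Sum>v\<in>e - {u}. f u v) = (\<Sum>u\<in>{1..n}. \<Sum>v\<in>{v. {u, v} \<in> E}. f u v :: nat)"
proof -
  define S where "S = Sigma E (\<lambda>e. Sigma e (\<lambda>u. e - {u}))"
  define T where "T = Sigma {1..n} (\<lambda>u. {v. {u, v} \<in> E})"
  have finite_edge: "finite e" if "e \<in> E" for e
    using that by (auto elim: edge_cases)
  have "(\<Sum>e\<in>E. \<Sum>u\<in>e. \<Sum>v\<in>e - {u}. f u v) = (\<Sum>(e, u, v)\<in>S. f u v)"
    unfolding S_def using finite_edges finite_edge
    by (simp add: sum.Sigma split_def)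
  also have "\<dots> = (\<Sum>(u, v)\<in>T. f u v)"
  proof (rule sum.reindex_bij_witness[where i="\<lambda>(u, v). ({u, v}, u, v)" and j="\<lambda>(e, p). p"])
    fix a assume "a \<in> S"
    then obtain e u v where a: "a = (e, u, v)" "e \<in> E" "u \<in> e" "v \<in> e" "v \<noteq> u"
      unfolding S_def by auto
    then have "e = {u, v}" by (auto elim!: edge_cases)
    then show "(\<lambda>(u, v). ({u, v}, u, v)) ((\<lambda>(e, p). p) a) = a" "(\<lambda>(e, p). p) a \<in> T"
      "(\<lambda>(u, v). f u v) ((\<lambda>(e, p). p) a) = (\<lambda>(e, u, v). f u v) a"
      using a edge_vertices[of u v] unfolding T_def by auto
  next
    fix b assume "b \<in> T"
    then obtain u v where "b = (u, v)" "{u, v} \<in> E" unfolding T_def by auto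
    then show "(\<lambda>(e, p). p) ((\<lambda>(u, v). ({u, v}, u, v)) b) = b"
      "(\<lambda>(u, v). ({u, v}, u, v)) b \<in> S"
      using edge_vertices[of u v] unfolding S_def by auto
  qed
  also have "\<dots> = (\<Sum>u\<in>{1..n}. \<Sum>v\<in>{v. {u, v} \<in> E}. f u v)"
    unfolding T_def using finite_neighbours by (subst sum.Sigma) auto
  finally show ?thesis .
qed

(* A graph code b is encoded by the number m < 2^n with b = bit_code n m;
   neighbour_parity m u is then c_u(b). *)
definition neighbour_parity :: "nat \<Rightarrow> nat \<Rightarrow> nat" where
  "neighbour_parity m u = (\<Sum>v\<in>{v. {u, v} \<in> E}. qbit v m) mod 2"

lemma parity_code_bit_code: "parity_code E (bit_code n m) u = neighbour_parity m u"
  unfolding parity_code_def neighbour_parity_def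
  by (rule arg_cong[where f="\<lambda>x. x mod 2"], rule sum.cong)
     (auto simp: bit_code_def dest: edge_vertices)

definition code_sign :: "nat \<Rightarrow> nat \<Rightarrow> complex" where
  "code_sign m x = (-1) ^ (\<Sum>j\<in>{1..n}. neighbour_parity m j * qbit j x)"

definition cz_sign :: "nat \<Rightarrow> complex" where
  "cz_sign x = (\<Prod>e\<in>E. cz_phase e x)"

lemma code_sign_square: "code_sign m x * code_sign m x = 1"
  unfolding code_sign_def by (simp add: power_add[symmetric] minus_one_power_iff)

lemma cnj_code_sign: "cnj (code_sign m x) = code_sign m x"
  unfolding code_sign_def by simp

lemma code_sign_xor: "code_sign m (xor x y) = code_sign m x * code_sign m y"
  unfolding code_sign_def qbit_xor power_sum prod.distrib[symmetric]
  by (rule prod.cong) (auto simp: minus_one_power_iff)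

lemma cz_sign_square: "cz_sign x * cz_sign x = 1"
proof -
  have "cz_phase e x * cz_phase e x = 1" for e by (simp add: cz_phase_def)
  then show ?thesis unfolding cz_sign_def prod.distrib[symmetric] by simp
qed

lemma cnj_cz_sign: "cnj (cz_sign x) = cz_sign x"
proof -
  have "cnj (cz_phase e x) = cz_phase e x" for e by (simp add: cz_phase_def)
  then show ?thesis unfolding cz_sign_def cnj_prod by simp
qed

lemma cz_phase_xor:
  assumes "e \<in> E"
  shows "cz_phase e (xor x m)
    = cz_phase e x * cz_phase e m * (-1) ^ (\<Sum>u\<in>e. \<Sum>v\<in>e - {u}. qbit u x * qbit v m)"
proof -
  obtain u v where e: "e = {u, v}" "u \<noteq> v" using assms by (auto elim: edge_cases)
  then have sum: "(\<Sum>u\<in>e. \<Sum>v\<in>e - {u}. qbit u x * qbit v m) = qbit u x * qbit v m + qbit v x * qbit u m"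
    by (simp add: insert_Diff_if)
  have phase: "cz_phase e y = (if qbit u y = 1 \<and> qbit v y = 1 then -1 else 1)" for y
    using e by (simp add: cz_phase_def)
  show ?thesis
    unfolding sum phase qbit_xor
    using qbit_cases[of u x] qbit_cases[of v x] qbit_cases[of u m] qbit_cases[of v m]
    by (elim disjE) simp_all
qed

lemma cz_sign_xor: "cz_sign (xor x m) = cz_sign x * cz_sign m * code_sign m x"
proof -
  have "cz_sign (xor x m)
      = (\<Prod>e\<in>E. cz_phase e x * cz_phase e m * (-1) ^ (\<Sum>u\<in>e. \<Sum>v\<in>e - {u}. qbit u x * qbit v m))"
    unfolding cz_sign_def by (rule prod.cong[OF refl]) (rule cz_phase_xor)
  also have "\<dots> = cz_sign x * cz_sign m * (-1) ^ (\<Sum>e\<in>E. \<Sum>u\<in>e. \<Sum>v\<in>e - {u}. qbit u x * qbit v m)"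
    unfolding cz_sign_def prod.distrib power_sum ..
  also have "(\<Sum>e\<in>E. \<Sum>u\<in>e. \<Sum>v\<in>e - {u}. qbit u x * qbit v m)
      = (\<Sum>u\<in>{1..n}. qbit u x * (\<Sum>v\<in>{v. {u, v} \<in> E}. qbit v m))"
    by (simp add: sum_edges_ordered_pairs sum_distrib_left)
  also have "(-1 :: complex) ^ \<dots> = code_sign m x"
    unfolding code_sign_def power_sum
    by (rule prod.cong) (auto simp: minus_one_power_iff neighbour_parity_def)
  finally show ?thesis .
qed

lemma code_sign_cz_sign: "code_sign m x * cz_sign x = cz_sign m * cz_sign (xor x m)"
proof -
  have "cz_sign m * cz_sign (xor x m) = (cz_sign m * cz_sign m) * cz_sign x * code_sign m x"
    by (simp only: cz_sign_xor mult_ac)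
  then show ?thesis by (simp add: cz_sign_square mult.commute)
qed

definition uniform_amplitude :: complex where
  "uniform_amplitude = complex_of_real (1 / sqrt (2 ^ n))"

lemma cnj_uniform_amplitude: "cnj uniform_amplitude = uniform_amplitude"
  unfolding uniform_amplitude_def by simp

lemma uniform_amplitude_square: "of_nat (2 ^ n) * (uniform_amplitude * uniform_amplitude) = 1"
proof -
  have "complex_of_real (1 / sqrt (2 ^ n) * (1 / sqrt (2 ^ n))) = 1 / 2 ^ n"
    by simp
  then show ?thesis unfolding uniform_amplitude_def of_real_mult[symmetric] by simp
qed

lemma graph_state_carrier: "graph_state n E \<in> carrier_vec (2 ^ n)"
  unfolding graph_state_def by simp

lemma graph_state_index: "x < 2 ^ n \<Longrightarrow> graph_state n E $ x = cz_sign x * uniform_amplitude"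
  unfolding graph_state_def cz_sign_def uniform_amplitude_def by simp

lemma cnj_graph_state_index: "x < 2 ^ n \<Longrightarrow> cnj (graph_state n E $ x) = graph_state n E $ x"
  by (simp add: graph_state_index cnj_cz_sign cnj_uniform_amplitude)

lemma braket_graph_state_self: "braket (graph_state n E) (graph_state n E) = 1"
proof -
  have "braket (graph_state n E) (graph_state n E)
      = (\<Sum>x<(2::nat) ^ n. (cz_sign x * cz_sign x) * (uniform_amplitude * uniform_amplitude))"
    using graph_state_carrier unfolding braket_def
    by (intro sum.cong) (auto simp: graph_state_index cnj_cz_sign cnj_uniform_amplitude ac_simps)
  then show ?thesis using uniform_amplitude_square by (simp add: cz_sign_square)
qed

lemma prod_bell_amp:
  assumes "x < 2 ^ n" "y < 2 ^ n" "m < 2 ^ n"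
  shows "(\<Prod>j\<in>{1..n}. bell_amp (neighbour_parity m j) (qbit j m) (qbit j x) (qbit j y))
    = (if y = xor x m then code_sign m x * uniform_amplitude else 0)"
proof -
  define c where "c = complex_of_real (1 / sqrt 2)"
  have "(\<Prod>j\<in>{1..n}. bell_amp (neighbour_parity m j) (qbit j m) (qbit j x) (qbit j y))
      = (\<Prod>j\<in>{1..n}. if qbit j y = (qbit j x + qbit j m) mod 2
           then (-1) ^ (neighbour_parity m j * qbit j x) * c else 0)"
    unfolding bell_amp_def c_def by simp
  also have "\<dots> = (if \<forall>j\<in>{1..n}. qbit j y = (qbit j x + qbit j m) mod 2
       then \<Prod>j\<in>{1..n}. (-1) ^ (neighbour_parity m j * qbit j x) * c else 0)"
    by (rule prod_if_zero) simp
  also have "(\<forall>j\<in>{1..n}. qbit j y = (qbit j x + qbit j m) mod 2) \<longleftrightarrow> y = xor x m"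
    using eq_if_qbit_eq[OF assms(2) xor_less_power2[OF assms(1,3)]] by (auto simp: qbit_xor)
  also have "(\<Prod>j\<in>{1..n}. (-1) ^ (neighbour_parity m j * qbit j x) * c)
      = code_sign m x * c ^ n"
    unfolding code_sign_def power_sum prod.distrib by simp
  also have "c ^ n = uniform_amplitude"
    unfolding c_def uniform_amplitude_def by (simp add: real_sqrt_power power_one_over)
  finally show ?thesis .
qed

(* A_m(x, y) of the header, stored at the index x * 2^n + y of |x> (x) |y>. *)
definition bell_family :: "nat \<Rightarrow> nat \<Rightarrow> complex" where
  "bell_family m r = (if r mod 2 ^ n = xor (r div 2 ^ n) m
     then code_sign m (r div 2 ^ n) * uniform_amplitude else 0)"

lemma Omega_g_eq_sum_ket_bra: "Omega_g n E = sum_ket_bra (2 ^ n * 2 ^ n) (2 ^ n) bell_family"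
proof (rule eq_matI)
  fix r c assume "r < dim_row (sum_ket_bra (2 ^ n * 2 ^ n) (2 ^ n) bell_family)"
    "c < dim_col (sum_ket_bra (2 ^ n * 2 ^ n) (2 ^ n) bell_family)"
  then have r: "r < 2 ^ n * 2 ^ n" and c: "c < 2 ^ n * 2 ^ n"
    by (auto simp: sum_ket_bra_def)
  then have bounds: "r div 2 ^ n < 2 ^ n" "c div 2 ^ n < 2 ^ n"
    by (simp_all add: less_mult_imp_div_less)
  let ?a = "\<lambda>m x y. \<Prod>j\<in>{1..n}. bell_amp (neighbour_parity m j) (qbit j m) (qbit j x) (qbit j y)"
  have "Omega_g n E $$ (r, c)
      = (\<Sum>m<2 ^ n. ?a m (r div 2 ^ n) (r mod 2 ^ n) * cnj (?a m (c div 2 ^ n) (c mod 2 ^ n)))"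
    using r c unfolding Omega_g_def index_mat(1)[OF r c] split sum_graph_codes cnj_prod
      prod.distrib[symmetric] parity_code_bit_code
    by (intro sum.cong prod.cong refl) (simp add: bit_code_def)
  also have "\<dots> = sum_ket_bra (2 ^ n * 2 ^ n) (2 ^ n) bell_family $$ (r, c)"
    unfolding sum_ket_bra_index[OF r c] bell_family_def
    by (intro sum.cong refl) (simp only: lessThan_iff prod_bell_amp bounds mod_less_divisor zero_less_power
        zero_less_numeral)
  finally show "Omega_g n E $$ (r, c) = sum_ket_bra (2 ^ n * 2 ^ n) (2 ^ n) bell_family $$ (r, c)" .
qed (auto simp: Omega_g_def sum_ket_bra_def)

lemma bell_family_pair_index:
  assumes "x < 2 ^ n" "y < 2 ^ n"
  shows "bell_family m (x * 2 ^ n + y) = (if y = xor x m then code_sign m x * uniform_amplitude else 0)"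
  using assms by (simp add: bell_family_def)

lemma orthonormal_bell_family: "orthonormal_family (2 ^ n * 2 ^ n) (2 ^ n) bell_family"
  unfolding orthonormal_family_def
proof (intro allI impI)
  fix m m' :: nat assume "m < 2 ^ n" "m' < 2 ^ n"
  have row: "(\<Sum>y<2 ^ n. cnj (bell_family m (x * 2 ^ n + y)) * bell_family m' (x * 2 ^ n + y))
      = (if m = m' then uniform_amplitude * uniform_amplitude else 0)" if x: "x < 2 ^ n" for x
  proof -
    have "(\<Sum>y<2 ^ n. cnj (bell_family m (x * 2 ^ n + y)) * bell_family m' (x * 2 ^ n + y))
        = (\<Sum>y<2 ^ n. if y = xor x m then (if m = m' then uniform_amplitude * uniform_amplitude else 0)
            else 0)"
      using x by (intro sum.cong refl)
        (auto simp: bell_family_pair_index xor_eq_xor_iff cnj_code_sign cnj_uniform_amplitude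
          code_sign_square mult.assoc mult.left_commute[of "code_sign m x"])
    then show ?thesis using xor_less_power2[OF x \<open>m < 2 ^ n\<close>] by simp
  qed
  have "(\<Sum>l<2 ^ n * 2 ^ n. cnj (bell_family m l) * bell_family m' l)
      = (\<Sum>x<(2::nat) ^ n. if m = m' then uniform_amplitude * uniform_amplitude else 0)"
    unfolding sum_lessThan_square_decompose by (intro sum.cong refl) (simp add: row)
  then show "(\<Sum>l<2 ^ n * 2 ^ n. cnj (bell_family m l) * bell_family m' l) = (if m = m' then 1 else 0)"
    using uniform_amplitude_square by simp
qed

lemma bell_family_swap_index:
  assumes "r < 2 ^ n * 2 ^ n"
  shows "bell_family m (swap_index (2 ^ n) r) = code_sign m m * bell_family m r"
proof -
  have "xor (r mod 2 ^ n) m = r div 2 ^ n \<longleftrightarrow> r mod 2 ^ n = xor (r div 2 ^ n) m"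
    by (metis xor_cancel_left xor.commute)
  moreover have "code_sign m (r mod 2 ^ n) = code_sign m m * code_sign m (r div 2 ^ n)"
    if "r mod 2 ^ n = xor (r div 2 ^ n) m"
    using that by (simp add: code_sign_xor)
  ultimately show ?thesis
    using swap_index[OF assms] by (auto simp: bell_family_def)
qed

lemma Omega_g_carrier: "Omega_g n E \<in> carrier_mat (2 ^ n * 2 ^ n) (2 ^ n * 2 ^ n)"
  unfolding Omega_g_eq_sum_ket_bra by (rule sum_ket_bra_carrier)

lemma Omega_g_idempotent: "Omega_g n E * Omega_g n E = Omega_g n E"
  unfolding Omega_g_eq_sum_ket_bra by (rule sum_ket_bra_idempotent[OF orthonormal_bell_family])

lemma Omega_g_adjoint: "mat_adjoint (Omega_g n E) = Omega_g n E"
  unfolding Omega_g_eq_sum_ket_bra by (rule sum_ket_bra_adjoint)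

lemma swap_op_Omega_g_swap_op: "swap_op (2 ^ n) * Omega_g n E * swap_op (2 ^ n) = Omega_g n E"
proof (rule eq_matI)
  fix i j assume "i < dim_row (Omega_g n E)" "j < dim_col (Omega_g n E)"
  then have ij: "i < 2 ^ n * 2 ^ n" "j < 2 ^ n * 2 ^ n" using Omega_g_carrier by auto
  have "(swap_op (2 ^ n) * Omega_g n E * swap_op (2 ^ n)) $$ (i, j)
      = Omega_g n E $$ (swap_index (2 ^ n) i, swap_index (2 ^ n) j)"
    using mat_mult_swap_op[OF mult_carrier_mat[OF swap_op_carrier Omega_g_carrier] ij]
      swap_op_mult_mat[OF Omega_g_carrier ij(1) swap_index(1)[OF ij(2)]] by simp
  also have "\<dots> = (\<Sum>m<2 ^ n. (cnj (code_sign m m) * code_sign m m) * (bell_family m i * cnj (bell_family m j)))"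
    using ij swap_index(1)
    by (simp add: Omega_g_eq_sum_ket_bra sum_ket_bra_index bell_family_swap_index ac_simps)
  also have "\<dots> = Omega_g n E $$ (i, j)"
    using ij by (simp add: cnj_code_sign code_sign_square Omega_g_eq_sum_ket_bra sum_ket_bra_index)
  finally show "(swap_op (2 ^ n) * Omega_g n E * swap_op (2 ^ n)) $$ (i, j) = Omega_g n E $$ (i, j)" .
qed (use Omega_g_carrier swap_op_carrier in auto)

lemma braket_bell_family_tensor_graph_state:
  assumes w: "w \<in> carrier_vec (2 ^ n)" and m: "m < 2 ^ n"
  shows "(\<Sum>s<2 ^ n * 2 ^ n. cnj (bell_family m s) * tensor_vec (graph_state n E) w $ s)
    = uniform_amplitude * cz_sign m * braket (graph_state n E) w"
proof -
  let ?G = "graph_state n E" and ?c = "uniform_amplitude * cz_sign m"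
  have row: "(\<Sum>y<2 ^ n. cnj (bell_family m (x * 2 ^ n + y)) * (?G $ x * w $ y))
      = ?c * (?G $ xor x m * w $ xor x m)" if x: "x < 2 ^ n" for x
  proof -
    have "(\<Sum>y<2 ^ n. cnj (bell_family m (x * 2 ^ n + y)) * (?G $ x * w $ y))
        = (\<Sum>y<2 ^ n. if y = xor x m then cnj (code_sign m x * uniform_amplitude) * (?G $ x * w $ y) else 0)"
      using x by (intro sum.cong refl) (simp add: bell_family_pair_index)
    also have "\<dots> = uniform_amplitude * (code_sign m x * cz_sign x) * uniform_amplitude * w $ xor x m"
      using x xor_less_power2[OF x m]
      by (simp add: graph_state_index cnj_code_sign cnj_uniform_amplitude ac_simps)
    also have "\<dots> = ?c * (?G $ xor x m * w $ xor x m)"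
      unfolding code_sign_cz_sign using xor_less_power2[OF x m] by (simp add: graph_state_index mult_ac)
    finally show ?thesis .
  qed
  have "(\<Sum>s<2 ^ n * 2 ^ n. cnj (bell_family m s) * tensor_vec ?G w $ s)
      = (\<Sum>x<2 ^ n. \<Sum>y<2 ^ n. cnj (bell_family m (x * 2 ^ n + y)) * (?G $ x * w $ y))"
    unfolding sum_lessThan_square_decompose
    by (intro sum.cong refl) (simp add: tensor_vec_index[OF graph_state_carrier w] pair_index_less)
  also have "\<dots> = ?c * (\<Sum>x<2 ^ n. ?G $ xor x m * w $ xor x m)"
    by (simp add: row sum_distrib_left)
  also have "\<dots> = ?c * braket ?G w"
    unfolding sum_xor_reindex[OF m, of "\<lambda>x. ?G $ x * w $ x"] braket_def
    using graph_state_carrier by (simp add: cnj_graph_state_index)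
  finally show ?thesis .
qed

lemma Omega_g_tensor_graph_state_left:
  assumes w: "w \<in> carrier_vec (2 ^ n)"
  shows "Omega_g n E *\<^sub>v tensor_vec (graph_state n E) w
    = braket (graph_state n E) w \<cdot>\<^sub>v tensor_vec (graph_state n E) (graph_state n E)"
proof (rule eq_vecI)
  let ?G = "graph_state n E" and ?c = "braket (graph_state n E) w"
  have GG: "tensor_vec ?G ?G \<in> carrier_vec (2 ^ n * 2 ^ n)"
    using tensor_vec_carrier graph_state_carrier by blast
  then show "dim_vec (Omega_g n E *\<^sub>v tensor_vec ?G w) = dim_vec (?c \<cdot>\<^sub>v tensor_vec ?G ?G)"
    using Omega_g_carrier by simp
  fix r assume "r < dim_vec (?c \<cdot>\<^sub>v tensor_vec ?G ?G)"
  then have r: "r < 2 ^ n * 2 ^ n" using GG by simp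
  define x where "x = r div 2 ^ n"
  define y where "y = r mod 2 ^ n"
  define m0 where "m0 = xor x y"
  have x: "x < 2 ^ n" and y: "y < 2 ^ n" and m0: "m0 < 2 ^ n"
    using r xor_less_power2 by (auto simp: x_def y_def m0_def less_mult_imp_div_less)
  have y_eq: "y = xor x m0" and m0_iff: "y = xor x m \<longleftrightarrow> m = m0" for m
    unfolding m0_def by (metis xor_cancel_left)+
  have "(Omega_g n E *\<^sub>v tensor_vec ?G w) $ r
      = (\<Sum>m<2 ^ n. bell_family m r * (uniform_amplitude * cz_sign m * ?c))"
    unfolding Omega_g_eq_sum_ket_bra sum_ket_bra_mult_vec[OF tensor_vec_carrier[OF graph_state_carrier w] r]
    by (intro sum.cong refl) (simp add: braket_bell_family_tensor_graph_state[OF w])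
  also have "\<dots> = (\<Sum>m<2 ^ n. if m = m0
      then code_sign m0 x * uniform_amplitude * (uniform_amplitude * cz_sign m0 * ?c) else 0)"
    by (intro sum.cong refl) (simp add: bell_family_def m0_iff flip: x_def y_def)
  also have "\<dots> = code_sign m0 x * uniform_amplitude * (uniform_amplitude * cz_sign m0 * ?c)"
    using m0 by simp
  also have "\<dots> = ?c * ((cz_sign x * cz_sign x) * cz_sign m0 * code_sign m0 x * (uniform_amplitude * uniform_amplitude))"
    by (simp add: cz_sign_square)
  also have "\<dots> = (?c \<cdot>\<^sub>v tensor_vec ?G ?G) $ r"
    using r GG x y
    by (simp add: tensor_vec_index[OF graph_state_carrier graph_state_carrier r] graph_state_index
        x_def[symmetric] y_def[symmetric] y_eq cz_sign_xor mult_ac)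
  finally show "(Omega_g n E *\<^sub>v tensor_vec ?G w) $ r = (?c \<cdot>\<^sub>v tensor_vec ?G ?G) $ r" .
qed

lemma Omega_g_tensor_graph_state_right:
  assumes w: "w \<in> carrier_vec (2 ^ n)"
  shows "Omega_g n E *\<^sub>v tensor_vec w (graph_state n E)
    = braket (graph_state n E) w \<cdot>\<^sub>v tensor_vec (graph_state n E) (graph_state n E)"
proof -
  let ?G = "graph_state n E" and ?F = "swap_op (2 ^ n)" and ?O = "Omega_g n E"
  note F = swap_op_carrier[of "2 ^ n"] and wG = tensor_vec_carrier[OF w graph_state_carrier]
  have "?O *\<^sub>v tensor_vec w ?G = (?F * ?O * ?F) *\<^sub>v tensor_vec w ?G"
    using swap_op_Omega_g_swap_op by simp
  also have "\<dots> = ?F *\<^sub>v (?O *\<^sub>v (?F *\<^sub>v tensor_vec w ?G))"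
    using assoc_mult_mat_vec[OF mult_carrier_mat[OF F Omega_g_carrier] F wG]
      assoc_mult_mat_vec[OF F Omega_g_carrier mult_mat_vec_carrier[OF F wG]] by simp
  also have "\<dots> = braket ?G w \<cdot>\<^sub>v tensor_vec ?G ?G"
    by (simp add: swap_op_tensor_vec[OF w graph_state_carrier] Omega_g_tensor_graph_state_left[OF w]
        mult_mat_vec[OF F tensor_vec_carrier[OF graph_state_carrier graph_state_carrier]]
        swap_op_tensor_vec[OF graph_state_carrier graph_state_carrier])
  finally show ?thesis .
qed

lemma Omega_g_mult_P_psi: "Omega_g n E * P_psi (graph_state n E) = 0\<^sub>m (2 ^ n * 2 ^ n) (2 ^ n * 2 ^ n)"
  by (rule mult_P_psi_eq_zero[OF graph_state_carrier braket_graph_state_self Omega_g_carrier])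
     (use tensor_vec_carrier[OF graph_state_carrier graph_state_carrier]
       in \<open>auto simp: Omega_g_tensor_graph_state_left\<close>)

lemma Omega_g_mult_P_sym_mult_P_psi:
  "Omega_g n E * P_sym (2 ^ n) * P_psi (graph_state n E) = 0\<^sub>m (2 ^ n * 2 ^ n) (2 ^ n * 2 ^ n)"
  by (rule mult_P_sym_mult_eq_zero[OF Omega_g_carrier P_psi_carrier[OF graph_state_carrier]
        commute_if_conjugation_fixed[OF swap_op_carrier Omega_g_carrier swap_op_squared
          swap_op_Omega_g_swap_op] Omega_g_mult_P_psi])

lemma sym_two_copy_strategy_Omega_g: "sym_two_copy_strategy (graph_state n E) (Omega_g n E)"
proof -
  have "Omega_g n E *\<^sub>v tensor_vec (graph_state n E) (graph_state n E)
      = tensor_vec (graph_state n E) (graph_state n E)"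
    using Omega_g_tensor_graph_state_left[OF graph_state_carrier] by (simp add: braket_graph_state_self)
  moreover have "psd (2 ^ n * 2 ^ n) (1\<^sub>m (2 ^ n * 2 ^ n) - Omega_g n E)"
    using Omega_g_carrier
    by (intro psd_projector complement_projector[OF Omega_g_carrier Omega_g_idempotent Omega_g_adjoint])
      auto
  ultimately show ?thesis
    using graph_state_carrier swap_op_Omega_g_swap_op
      psd_projector[OF Omega_g_carrier Omega_g_idempotent Omega_g_adjoint]
    unfolding sym_two_copy_strategy_def Let_def by simp
qed

end

theorem mainTheorem6:
  fixes n :: nat and E :: "nat set set"
  assumes "simple_graph n E"
  defines "G \<equiv> graph_state n E" and "\<Omega> \<equiv> Omega_g n E"
      and "F \<equiv> swap_op (2 ^ n)" and "D \<equiv> 2 ^ n * 2 ^ n"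
  shows
    \<comment> \<open>(i)\<close>
    "(\<Omega> \<in> carrier_mat D D \<and> \<Omega> * \<Omega> = \<Omega> \<and> mat_adjoint \<Omega> = \<Omega> \<and> F * \<Omega> * F = \<Omega>)
     \<comment> \<open>(ii)\<close>
     \<and> (\<forall>\<omega> \<in> carrier_vec (2 ^ n). braket \<omega> \<omega> = 1 \<longrightarrow>
          \<Omega> *\<^sub>v tensor_vec G \<omega> = braket G \<omega> \<cdot>\<^sub>v tensor_vec G G \<and>
          \<Omega> *\<^sub>v tensor_vec \<omega> G = braket G \<omega> \<cdot>\<^sub>v tensor_vec G G)
     \<and> \<Omega> *\<^sub>v tensor_vec G G = tensor_vec G G
     \<comment> \<open>(iii)\<close>
     \<and> sym_two_copy_strategy G \<Omega>
     \<and> \<Omega> * P_psi G = 0\<^sub>m D D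
     \<and> \<Omega> * P_sym (2 ^ n) * P_psi G = 0\<^sub>m D D
     \<and> lambda_star G \<Omega> = 0 \<and> gamma_star G \<Omega> = 0 \<and> xi_star G \<Omega> = 0"
proof -
  interpret qubit_graph n E by unfold_locales (rule assms(1))
  have "\<Omega> *\<^sub>v tensor_vec G G = tensor_vec G G"
    using Omega_g_tensor_graph_state_left[OF graph_state_carrier]
    unfolding G_def \<Omega>_def by (simp add: braket_graph_state_self)
  moreover have "lambda_star G \<Omega> = 0 \<and> gamma_star G \<Omega> = 0 \<and> xi_star G \<Omega> = 0"
    unfolding G_def \<Omega>_def
    by (rule star_quantities_eq_zero[OF graph_state_carrier _ Omega_g_carrier Omega_g_mult_P_psi
          Omega_g_mult_P_sym_mult_P_psi]) simp
  ultimately show ?thesis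
    unfolding G_def \<Omega>_def F_def D_def
    using Omega_g_carrier Omega_g_idempotent Omega_g_adjoint swap_op_Omega_g_swap_op
      Omega_g_tensor_graph_state_left Omega_g_tensor_graph_state_right sym_two_copy_strategy_Omega_g
      Omega_g_mult_P_psi Omega_g_mult_P_sym_mult_P_psi
    by blast
qed

end
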